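(* Let $1 \le d \le D$ be integers and let $\mathcal{L} \subseteq \mathbb{R}^D$ be a $d$-dimensional affine subspace (viewed as an embedded submanifold of $\mathbb{R}^D$). Let $X$ be a random vector in $\mathbb{R}^D$ whose distribution is supported on $\mathcal{L}$ and has a density $p$ with respect to the $d$-dimensional Lebesgue measure on $\mathcal{L}$, where $p$ is continuous and the distribution has finite second moments. For $\delta \in \mathbb{R}$ and $x \in \mathbb{R}^D$ define $$\varrho(x,\delta) \;=\; \int p(x_0)\, \mathcal{N}\!\left(x - x_0;\, 0,\, e^{2\delta} I_D\right) \mathrm{d}x_0,$$ the integral being over $\mathcal{L}$ with respect to its $d$-dimensional Lebesgue measure, i.e. $\varrho(\cdot,\delta)$ is the Lebesgue density on $\mathbb{R}^D$ of $X + e^{\delta} Z$ with $Z \sim \mathcal{N}(0, I_D)$ independent of $X$. Then for every $x \in \mathcal{L}$ with $p(x) > 0$, $$\lim_{\delta \to -\infty} \frac{\partial}{\partial \delta} \log \varrho(x,\delta) \;=\; d - D.$$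
   Context: $\mathcal{N}(y; \mu, \Sigma)$ denotes the Gaussian density with mean $\mu$ and covariance $\Sigma$ evaluated at $y$, and $I_D$ is the $D\times D$ identity matrix. The paper writes the data density as $p(\cdot,0)$ and, with an abuse of notation, identifies it with the density of the data with respect to $d$-dimensional Lebesgue measure on $\mathcal{L}$. *)

theory Defs
  imports "HOL-Analysis.Analysis"
begin

text \<open>A d-dimensional affine subspace L of the ambient space 'a (of dimension D = DIM('a))
  is represented as the image of an affine isometric embedding phi of a d-dimensional
  Euclidean space 'b (d = DIM('b)).  The d-dimensional Lebesgue measure on L is the
  push-forward of lborel on 'b under phi (independent of the chosen isometry).\<close>

definition affine_isometry :: "('b::euclidean_space \<Rightarrow> 'a::euclidean_space) \<Rightarrow> bool" where
  "affine_isometry \<phi> \<longleftrightarrow>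
     (\<exists>a f. linear f \<and> (\<forall>u. norm (f u) = norm u) \<and> (\<forall>u. \<phi> u = a + f u))"

definition gauss_density :: "real \<Rightarrow> 'a::euclidean_space \<Rightarrow> real" where
  "gauss_density s y = (2 * pi * s) powr (- real DIM('a) / 2) * exp (- (norm y)\<^sup>2 / (2 * s))"

definition smoothed_density ::
  "('b::euclidean_space \<Rightarrow> 'a::euclidean_space) \<Rightarrow> ('a \<Rightarrow> real) \<Rightarrow> 'a \<Rightarrow> real \<Rightarrow> real" where
  "smoothed_density \<phi> p x \<delta> =
     (\<integral>u. p (\<phi> u) * gauss_density (exp (2 * \<delta>)) (x - \<phi> u) \<partial>(lborel :: 'b measure))"

end

theory Submission
  imports Defs "HOL-Probability.Distributions" "HOL-Real_Asymp.Real_Asymp"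
begin

(* Write x = phi u0 and q = p o phi.  Since phi is an affine isometry, the Gaussian factor splits off
   as rho(x, delta) = (2 pi)^(-D/2) e^(-D delta) H(delta) with
   H(delta) = int q(u) exp (-|u - u0|^2 e^(-2 delta) / 2) du,
   so the derivative of log rho is H'(delta) / H(delta) - D.  The substitution u = u0 + e^delta v turns
   e^(-d delta) H(delta) and e^(-d delta) H'(delta) into integrals concentrating at u0 as delta -> -oo:
   near u0 continuity of q and dominated convergence apply, away from u0 the Gaussian decay beats
   every power of e^(-delta).  The limits are q(u0) times int e^(-|v|^2/2) dv = (2 pi)^(d/2) and
   int |v|^2 e^(-|v|^2/2) dv = d (2 pi)^(d/2), so H'/H -> d. *)

lemma has_bochner_integral_lborel_Basis_prod:
  fixes f :: "'a::euclidean_space \<Rightarrow> real \<Rightarrow> real"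
  assumes int: "\<And>b. b \<in> Basis \<Longrightarrow> has_bochner_integral lborel (f b) (I b)"
    and nonneg: "\<And>b x. b \<in> Basis \<Longrightarrow> 0 \<le> f b x"
  shows "has_bochner_integral (lborel :: 'a measure) (\<lambda>x. \<Prod>b\<in>Basis. f b (x \<bullet> b)) (\<Prod>b\<in>Basis. I b)"
proof (rule has_bochner_integral_nn_integral)
  have meas: "f b \<in> borel_measurable borel" if "b \<in> Basis" for b
    using int[OF that] by (auto dest: borel_measurable_has_bochner_integral)
  show "(\<lambda>x. \<Prod>b\<in>Basis. f b (x \<bullet> b)) \<in> borel_measurable lborel"
  proof (rule borel_measurable_prod)
    fix b :: 'a assume "b \<in> Basis"
    note meas[OF this, measurable]
    show "(\<lambda>x. f b (x \<bullet> b)) \<in> borel_measurable lborel"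
      by measurable
  qed
  have I: "(\<integral>\<^sup>+x. f b x \<partial>lborel) = ennreal (I b)" "0 \<le> I b" if "b \<in> Basis" for b
  proof -
    have "integrable lborel (f b)" "I b = integral\<^sup>L lborel (f b)"
      using int[OF that] by (auto simp: has_bochner_integral_iff)
    then show "(\<integral>\<^sup>+x. f b x \<partial>lborel) = ennreal (I b)" "0 \<le> I b"
      using nonneg[OF that] by (simp_all add: nn_integral_eq_integral)
  qed
  show "(\<integral>\<^sup>+x. ennreal (\<Prod>b\<in>Basis. f b (x \<bullet> b)) \<partial>lborel) = ennreal (\<Prod>b\<in>Basis. I b)"
  proof -
    have "(\<integral>\<^sup>+x. ennreal (\<Prod>b\<in>Basis. f b (x \<bullet> b)) \<partial>lborel)
        = (\<integral>\<^sup>+x. (\<Prod>b\<in>Basis. ennreal (f b (x \<bullet> b))) \<partial>lborel)"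
      using nonneg by (simp add: prod_ennreal)
    also have "\<dots> = (\<Prod>b\<in>Basis. \<integral>\<^sup>+x. ennreal (f b x) \<partial>lborel)"
      using meas by (intro nn_integral_lborel_prod) auto
    also have "\<dots> = ennreal (\<Prod>b\<in>Basis. I b)"
      using I by (simp add: prod_ennreal)
    finally show ?thesis .
  qed
  show "0 \<le> (\<Prod>b\<in>Basis. I b)"
    using I by (simp add: prod_nonneg)
qed (use nonneg in \<open>auto intro!: prod_nonneg\<close>)

lemma norm_power2_eq_sum_Basis: "(norm v)\<^sup>2 = (\<Sum>b\<in>Basis. (v \<bullet> b)\<^sup>2)"
  for v :: "'a::euclidean_space"
  by (simp only: power2_norm_eq_inner euclidean_inner[of v v]) (simp add: power2_eq_square)

lemma exp_neg_norm_sq_eq_Basis_prod: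
  "exp (- (norm v)\<^sup>2 / 2) = sqrt (2 * pi) ^ DIM('a) * (\<Prod>b\<in>Basis. std_normal_density (v \<bullet> b))"
  for v :: "'a::euclidean_space"
proof -
  have "exp (- (norm v)\<^sup>2 / 2) = (\<Prod>b\<in>Basis. exp (- (v \<bullet> b)\<^sup>2 / 2))"
    by (simp add: norm_power2_eq_sum_Basis exp_sum[symmetric] sum_divide_distrib sum_negf)
  then show ?thesis
    by (simp add: std_normal_density_def prod_dividef)
qed

lemma has_bochner_integral_gaussian:
  "has_bochner_integral lborel (\<lambda>v::'a::euclidean_space. exp (- (norm v)\<^sup>2 / 2)) (sqrt (2 * pi) ^ DIM('a))"
proof -
  have "has_bochner_integral (lborel :: 'a measure) (\<lambda>v. \<Prod>b\<in>Basis. std_normal_density (v \<bullet> b)) 1"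
    using has_bochner_integral_lborel_Basis_prod[of "\<lambda>_. std_normal_density" "\<lambda>_. 1"]
      std_normal_moment_even[of 0] by simp
  from has_bochner_integral_mult_right[OF this] show ?thesis
    unfolding exp_neg_norm_sq_eq_Basis_prod by simp
qed

lemma has_bochner_integral_gaussian_second_moment:
  "has_bochner_integral lborel (\<lambda>v::'a::euclidean_space. (norm v)\<^sup>2 * exp (- (norm v)\<^sup>2 / 2))
     (DIM('a) * sqrt (2 * pi) ^ DIM('a))"
proof -
  define f :: "'a \<Rightarrow> 'a \<Rightarrow> real \<Rightarrow> real"
    where "f c b x = (if b = c then x\<^sup>2 else 1) * std_normal_density x" for c b x
  have f: "has_bochner_integral lborel (f c b) 1" for c b
    using std_normal_moment_even[of 0] std_normal_moment_even[of 1]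
    by (cases "b = c") (simp_all add: f_def[abs_def] mult.commute)
  have "has_bochner_integral (lborel :: 'a measure) (\<lambda>v. \<Prod>b\<in>Basis. f c b (v \<bullet> b)) 1" for c
    using has_bochner_integral_lborel_Basis_prod[of "f c" "\<lambda>_. 1"] f by (simp add: f_def)
  then have "has_bochner_integral (lborel :: 'a measure)
      (\<lambda>v. \<Sum>c\<in>Basis. \<Prod>b\<in>Basis. f c b (v \<bullet> b)) (\<Sum>c\<in>(Basis :: 'a set). 1)"
    by (rule has_bochner_integral_sum)
  moreover have "(\<Sum>c\<in>Basis. \<Prod>b\<in>Basis. f c b (v \<bullet> b)) = (norm v)\<^sup>2 * (\<Prod>b\<in>Basis. std_normal_density (v \<bullet> b))"
    for v :: 'a
    by (simp add: norm_power2_eq_sum_Basis sum_distrib_right f_def prod.distrib)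
  ultimately have "has_bochner_integral (lborel :: 'a measure)
      (\<lambda>v. (norm v)\<^sup>2 * (\<Prod>b\<in>Basis. std_normal_density (v \<bullet> b))) DIM('a)"
    by simp
  from has_bochner_integral_mult_right[OF this, of "sqrt (2 * pi) ^ DIM('a)"] show ?thesis
    unfolding exp_neg_norm_sq_eq_Basis_prod by (simp add: mult_ac)
qed

lemma integrable_mult_bounded:
  fixes q h :: "'a \<Rightarrow> real"
  assumes q: "integrable M q" and h: "h \<in> borel_measurable M" and bound: "\<And>u. \<bar>h u\<bar> \<le> B"
  shows "integrable M (\<lambda>u. q u * h u)"
proof (rule Bochner_Integration.integrable_bound[of M "\<lambda>u. B * q u"])
  show "integrable M (\<lambda>u. B * q u)"
    using q by simp
  show "(\<lambda>u. q u * h u) \<in> borel_measurable M"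
    using q h by measurable
  have "0 \<le> B"
    using abs_ge_zero bound order_trans by blast
  then have "\<bar>q u\<bar> * \<bar>h u\<bar> \<le> \<bar>B\<bar> * \<bar>q u\<bar>" for u
    using mult_left_mono[OF bound[of u] abs_ge_zero[of "q u"]] by (simp add: mult.commute)
  then show "AE u in M. norm (q u * h u) \<le> norm (B * q u)"
    by (simp add: abs_mult)
qed

lemma has_real_derivative_integral_bounded_kernel:
  fixes q :: "'a \<Rightarrow> real" and k k' :: "real \<Rightarrow> 'a \<Rightarrow> real"
  assumes q: "integrable M q"
    and k_meas: "\<And>t. k t \<in> borel_measurable M"
    and k_deriv: "\<And>t u. ((\<lambda>t. k t u) has_real_derivative k' t u) (at t)"
    and k_bound: "\<And>t u. \<bar>k t u\<bar> \<le> B" and k'_bound: "\<And>t u. \<bar>k' t u\<bar> \<le> B"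
  shows "((\<lambda>t. \<integral>u. q u * k t u \<partial>M) has_real_derivative (\<integral>u. q u * k' t u \<partial>M)) (at t)"
  unfolding has_field_derivative_iff tendsto_at_iff_sequentially
proof (intro allI impI)
  fix X :: "nat \<Rightarrow> real"
  assume X: "\<forall>i. X i \<in> UNIV - {t}" "X \<longlonglongrightarrow> t"
  define dq where "dq i u = (k (X i) u - k t u) / (X i - t)" for i u
  have q_meas[measurable]: "q \<in> borel_measurable M"
    using q by auto
  have dq_meas[measurable]: "dq i \<in> borel_measurable M" for i
    using k_meas unfolding dq_def by measurable
  have dq_lim: "(\<lambda>i. dq i u) \<longlonglongrightarrow> k' t u" for u
    using k_deriv[of u t] X unfolding dq_def has_field_derivative_iff tendsto_at_iff_sequentially
    by (auto simp: o_def)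
  have dq_bound: "\<bar>dq i u\<bar> \<le> B" for i u
  proof -
    have "\<bar>k (X i) u - k t u\<bar> \<le> B * \<bar>X i - t\<bar>"
      using field_differentiable_bound[of UNIV "\<lambda>t. k t u" "\<lambda>t. k' t u" B "X i" t] k_deriv k'_bound
      by (auto simp: has_field_derivative_at_within)
    with X show ?thesis
      by (auto simp: dq_def divide_le_eq)
  qed
  have "(\<lambda>u. k' t u) \<in> borel_measurable M"
    by (rule borel_measurable_LIMSEQ_real[OF dq_lim dq_meas])
  then have "(\<lambda>i. \<integral>u. q u * dq i u \<partial>M) \<longlonglongrightarrow> (\<integral>u. q u * k' t u \<partial>M)"
  proof (intro integral_dominated_convergence[where w="\<lambda>u. B * \<bar>q u\<bar>"])
    show "AE u in M. norm (q u * dq i u) \<le> B * \<bar>q u\<bar>" for i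
      using mult_left_mono[OF dq_bound abs_ge_zero] by (simp add: abs_mult mult.commute)
  qed (use q dq_lim in \<open>simp_all add: tendsto_mult_left\<close>)
  moreover have "(\<integral>u. q u * dq i u \<partial>M) = ((\<integral>u. q u * k (X i) u \<partial>M) - (\<integral>u. q u * k t u \<partial>M)) / (X i - t)" for i
  proof -
    have "integrable M (\<lambda>u. q u * k s u)" for s
      using q k_meas k_bound by (rule integrable_mult_bounded)
    moreover have "(\<integral>u. q u * dq i u \<partial>M) = (\<integral>u. (q u * k (X i) u - q u * k t u) / (X i - t) \<partial>M)"
      by (simp only: dq_def times_divide_eq_right right_diff_distrib)
    ultimately show ?thesis
      by (simp only: integral_divide_zero Bochner_Integration.integral_diff)
  qed
  ultimately show "((\<lambda>y. ((\<integral>u. q u * k y u \<partial>M) - (\<integral>u. q u * k t u \<partial>M)) / (y - t)) \<circ> X)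
      \<longlonglongrightarrow> (\<integral>u. q u * k' t u \<partial>M)"
    by (simp add: o_def)
qed

lemma lborel_integral_affine:
  fixes g :: "'a::euclidean_space \<Rightarrow> real"
  assumes [measurable]: "g \<in> borel_measurable borel" and c: "c \<noteq> 0"
  shows "(\<integral>x. g x \<partial>lborel) = \<bar>c\<bar> ^ DIM('a) * (\<integral>v. g (t + c *\<^sub>R v) \<partial>lborel)"
proof -
  have "(\<integral>x. g x \<partial>lborel) = (\<integral>x. g x \<partial>density (distr lborel borel (\<lambda>x. t + c *\<^sub>R x)) (\<lambda>_. \<bar>c\<bar> ^ DIM('a)))"
    using lborel_affine[OF c, of t] by simp
  then show ?thesis
    by (simp add: integral_density integral_distr)
qed

lemma tendsto_scaled_kernel_integral_ball:
  fixes q :: "'a::euclidean_space \<Rightarrow> real" and W :: "real \<Rightarrow> real"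
  assumes q_meas [measurable]: "q \<in> borel_measurable borel" and q_cont: "isCont q u0"
    and q_bound: "\<And>u. u \<in> ball u0 r \<Longrightarrow> \<bar>q u\<bar> \<le> Q" and "r > 0"
    and W_meas [measurable]: "W \<in> borel_measurable borel"
    and W_int: "integrable lborel (\<lambda>v::'a. W ((norm v)\<^sup>2))"
  shows "((\<lambda>R. R ^ DIM('a) * (\<integral>u. indicator (ball u0 r) u * q u * W ((R * dist u u0)\<^sup>2) \<partial>lborel))
          \<longlongrightarrow> q u0 * (\<integral>v. W ((norm (v::'a))\<^sup>2) \<partial>lborel)) at_top"
proof -
  have [measurable]: "ball u0 r \<in> sets borel"
    by simp
  have "0 \<le> Q"
    using q_bound[of u0] \<open>r > 0\<close> by (meson abs_ge_zero centre_in_ball order_trans)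
  define s where "s R v = indicator (ball u0 r) (u0 + v /\<^sub>R R) * q (u0 + v /\<^sub>R R) * W ((norm v)\<^sup>2)"
    for R and v :: 'a
  have rescale: "R ^ DIM('a) * (\<integral>u. indicator (ball u0 r) u * q u * W ((R * dist u u0)\<^sup>2) \<partial>lborel)
      = (\<integral>v. s R v \<partial>lborel)" if "R > 0" for R
  proof -
    have "(\<lambda>u. indicator (ball u0 r) u * q u * W ((R * dist u u0)\<^sup>2)) \<in> borel_measurable borel"
      by measurable
    from lborel_integral_affine[OF this, of "1 / R" u0] that show ?thesis
      by (simp add: s_def dist_norm field_simps)
  qed
  have "((\<lambda>R. \<integral>v. s R v \<partial>lborel) \<longlongrightarrow> (\<integral>v. q u0 * W ((norm (v::'a))\<^sup>2) \<partial>lborel)) at_top"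
  proof (rule integral_dominated_convergence_at_top[where w="\<lambda>v. Q * \<bar>W ((norm v)\<^sup>2)\<bar>"])
    show "AE v in lborel. ((\<lambda>R. s R v) \<longlongrightarrow> q u0 * W ((norm v)\<^sup>2)) at_top"
    proof (rule AE_I2)
      fix v :: 'a
      have "((\<lambda>R. u0 + v /\<^sub>R R) \<longlongrightarrow> u0) at_top"
        using tendsto_add[OF tendsto_const tendsto_scaleR[OF tendsto_inverse_0_at_top[OF filterlim_ident] tendsto_const]]
        by simp
      then have in_ball: "\<forall>\<^sub>F R in at_top. u0 + v /\<^sub>R R \<in> ball u0 r"
        and q_lim: "((\<lambda>R. q (u0 + v /\<^sub>R R)) \<longlongrightarrow> q u0) at_top"
        using tendstoD[of _ u0 _ r] \<open>r > 0\<close> isCont_tendsto_compose[OF q_cont]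
        by (auto simp: dist_commute)
      have "\<forall>\<^sub>F R in at_top. q (u0 + v /\<^sub>R R) * W ((norm v)\<^sup>2) = s R v"
        using in_ball by eventually_elim (simp add: s_def)
      with tendsto_mult_right[OF q_lim] show "((\<lambda>R. s R v) \<longlongrightarrow> q u0 * W ((norm v)\<^sup>2)) at_top"
        by (rule Lim_transform_eventually)
    qed
    show "\<forall>\<^sub>F R in at_top. AE v in lborel. norm (s R v) \<le> Q * \<bar>W ((norm v)\<^sup>2)\<bar>"
    proof (intro always_eventually allI AE_I2)
      fix R v
      from q_bound \<open>0 \<le> Q\<close> have "\<bar>indicator (ball u0 r) u * q u\<bar> \<le> Q" for u
        by (simp split: split_indicator)
      then show "norm (s R v) \<le> Q * \<bar>W ((norm v)\<^sup>2)\<bar>"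
        unfolding s_def real_norm_def abs_mult[of _ "W _"] by (rule mult_right_mono) simp
    qed
  qed (use W_int in \<open>auto simp: s_def\<close>)
  then have "((\<lambda>R. \<integral>v. s R v \<partial>lborel) \<longlongrightarrow> q u0 * (\<integral>v. W ((norm (v::'a))\<^sup>2) \<partial>lborel)) at_top"
    by simp
  moreover have "\<forall>\<^sub>F R in at_top.
      (\<integral>v. s R v \<partial>lborel) = R ^ DIM('a) * (\<integral>u. indicator (ball u0 r) u * q u * W ((R * dist u u0)\<^sup>2) \<partial>lborel)"
    using eventually_gt_at_top[of 0] by eventually_elim (simp add: rescale)
  ultimately show ?thesis
    by (rule Lim_transform_eventually)
qed

lemma tendsto_scaled_kernel_integral_outside_ball:
  fixes q :: "'a::euclidean_space \<Rightarrow> real" and W :: "real \<Rightarrow> real"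
  assumes q: "integrable lborel q" and W_meas [measurable]: "W \<in> borel_measurable borel"
    and W_decay: "\<And>y. 0 \<le> y \<Longrightarrow> \<bar>W y\<bar> \<le> M * exp (- a * y)" and "a > 0" and "r > 0"
  shows "((\<lambda>R. R ^ DIM('a) * (\<integral>u. indicator (- ball u0 r) u * q u * W ((R * dist u u0)\<^sup>2) \<partial>lborel))
          \<longlongrightarrow> 0) at_top"
proof (rule Lim_null_comparison)
  define Q where "Q = (\<integral>u. \<bar>q u\<bar> \<partial>lborel)"
  have "((\<lambda>R. R ^ DIM('a) * exp (- (a * r\<^sup>2) * R\<^sup>2)) \<longlongrightarrow> 0) at_top"
    using \<open>a > 0\<close> \<open>r > 0\<close> by real_asymp
  then show "((\<lambda>R. M * Q * (R ^ DIM('a) * exp (- (a * r\<^sup>2) * R\<^sup>2))) \<longlongrightarrow> 0) at_top"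
    by (rule tendsto_mult_right_zero)
  have "0 \<le> M"
    using W_decay[of 0] abs_ge_zero[of "W 0"] by simp
  show "\<forall>\<^sub>F R in at_top. norm (R ^ DIM('a) * (\<integral>u. indicator (- ball u0 r) u * q u * W ((R * dist u u0)\<^sup>2) \<partial>lborel))
      \<le> M * Q * (R ^ DIM('a) * exp (- (a * r\<^sup>2) * R\<^sup>2))"
    using eventually_ge_at_top[of 0]
  proof eventually_elim
    case (elim R)
    define E where "E = M * exp (- (a * r\<^sup>2) * R\<^sup>2)"
    have kernel_bound: "\<bar>indicator (- ball u0 r) u * W ((R * dist u u0)\<^sup>2)\<bar> \<le> E" for u
    proof (cases "u \<in> ball u0 r")
      case False
      then have "(R * r)\<^sup>2 \<le> (R * dist u u0)\<^sup>2"
        using elim \<open>r > 0\<close> by (intro power_mono mult_left_mono) (auto simp: dist_commute)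
      then have "a * (R * r)\<^sup>2 \<le> a * (R * dist u u0)\<^sup>2"
        using \<open>a > 0\<close> by simp
      then have "exp (- a * (R * dist u u0)\<^sup>2) \<le> exp (- (a * r\<^sup>2) * R\<^sup>2)"
        by (simp add: power_mult_distrib mult_ac)
      then have "M * exp (- a * (R * dist u u0)\<^sup>2) \<le> E"
        unfolding E_def using \<open>0 \<le> M\<close> by (rule mult_left_mono)
      with False W_decay[of "(R * dist u u0)\<^sup>2"] show ?thesis
        by simp
    qed (use \<open>0 \<le> M\<close> in \<open>simp add: E_def\<close>)
    have integrable: "integrable lborel (\<lambda>u. indicator (- ball u0 r) u * q u * W ((R * dist u u0)\<^sup>2))"
      using integrable_mult_bounded[OF q _ kernel_bound] by (simp add: mult_ac)
    have "\<bar>indicator (- ball u0 r) u * q u * W ((R * dist u u0)\<^sup>2)\<bar> \<le> E * \<bar>q u\<bar>" for u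
      using mult_right_mono[OF kernel_bound[of u] abs_ge_zero[of "q u"]] by (simp add: abs_mult mult_ac)
    then have "\<bar>\<integral>u. indicator (- ball u0 r) u * q u * W ((R * dist u u0)\<^sup>2) \<partial>lborel\<bar> \<le> E * Q"
      using integral_abs_bound_integral[OF integrable, of "\<lambda>u. E * \<bar>q u\<bar>"] q by (simp add: Q_def)
    then have "R ^ DIM('a) * \<bar>\<integral>u. indicator (- ball u0 r) u * q u * W ((R * dist u u0)\<^sup>2) \<partial>lborel\<bar>
        \<le> R ^ DIM('a) * (E * Q)"
      using elim by (simp add: mult_left_mono)
    then show ?case
      using elim by (simp add: abs_mult E_def mult_ac)
  qed
qed

lemma tendsto_scaled_kernel_integral:
  fixes q :: "'a::euclidean_space \<Rightarrow> real" and W :: "real \<Rightarrow> real"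
  assumes q: "integrable lborel q" and q_cont: "isCont q u0"
    and W_meas [measurable]: "W \<in> borel_measurable borel"
    and W_decay: "\<And>y. 0 \<le> y \<Longrightarrow> \<bar>W y\<bar> \<le> M * exp (- a * y)" and "a > 0"
    and W_int: "integrable lborel (\<lambda>v::'a. W ((norm v)\<^sup>2))"
  shows "((\<lambda>R. R ^ DIM('a) * (\<integral>u. q u * W ((R * dist u u0)\<^sup>2) \<partial>lborel))
          \<longlongrightarrow> q u0 * (\<integral>v. W ((norm (v::'a))\<^sup>2) \<partial>lborel)) at_top"
proof -
  obtain r where "r > 0" and r: "\<And>u. dist u u0 < r \<Longrightarrow> dist (q u) (q u0) < 1"
    using q_cont unfolding continuous_at_eps_delta by (metis zero_less_one)
  have q_bound: "\<bar>q u\<bar> \<le> \<bar>q u0\<bar> + 1" if "u \<in> ball u0 r" for u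
    using r[of u] that by (auto simp: dist_commute dist_real_def)
  have "0 \<le> M"
    using W_decay[of 0] abs_ge_zero[of "W 0"] by simp
  have W_bound: "\<bar>W y\<bar> \<le> M" if "0 \<le> y" for y
  proof -
    have "exp (- a * y) \<le> 1"
      using \<open>a > 0\<close> that by simp
    with W_decay[OF that] \<open>0 \<le> M\<close> show ?thesis
      using mult_left_le order_trans by blast
  qed
  have split: "(\<integral>u. q u * W ((R * dist u u0)\<^sup>2) \<partial>lborel)
      = (\<integral>u. indicator (ball u0 r) u * q u * W ((R * dist u u0)\<^sup>2) \<partial>lborel)
        + (\<integral>u. indicator (- ball u0 r) u * q u * W ((R * dist u u0)\<^sup>2) \<partial>lborel)" for R
  proof -
    let ?f = "\<lambda>u. q u * W ((R * dist u u0)\<^sup>2)"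
    have "integrable lborel ?f"
      using q W_bound by (intro integrable_mult_bounded[where B=M]) auto
    then have restrict: "integrable lborel (\<lambda>u. indicator A u * ?f u)" if "A \<in> sets borel" for A
      using integrable_real_mult_indicator[of A lborel ?f] that by (simp add: mult.commute)
    have "(\<integral>u. ?f u \<partial>lborel) = (\<integral>u. indicator (ball u0 r) u * ?f u + indicator (- ball u0 r) u * ?f u \<partial>lborel)"
      by (rule Bochner_Integration.integral_cong) (auto split: split_indicator)
    then show ?thesis
      using restrict by (simp add: mult.assoc)
  qed
  show ?thesis
    using tendsto_add[OF tendsto_scaled_kernel_integral_ball[OF _ q_cont q_bound \<open>r > 0\<close> W_meas W_int]
        tendsto_scaled_kernel_integral_outside_ball[OF q W_meas W_decay \<open>a > 0\<close> \<open>r > 0\<close>]] q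
    by (simp add: split distrib_left)
qed

lemma tendsto_exp_scaled_kernel_integral:
  fixes q :: "'a::euclidean_space \<Rightarrow> real" and W :: "real \<Rightarrow> real"
  assumes "integrable lborel q" and "isCont q u0"
    and "W \<in> borel_measurable borel"
    and "\<And>y. 0 \<le> y \<Longrightarrow> \<bar>W y\<bar> \<le> M * exp (- a * y)" and "a > 0"
    and "integrable lborel (\<lambda>v::'a. W ((norm v)\<^sup>2))"
  shows "((\<lambda>t::real. exp (- real DIM('a) * t) * (\<integral>u. q u * W ((exp (- t) * dist u u0)\<^sup>2) \<partial>lborel))
          \<longlongrightarrow> q u0 * (\<integral>v. W ((norm (v::'a))\<^sup>2) \<partial>lborel)) at_bot"
proof -
  have "filterlim (\<lambda>t::real. exp (- t)) at_top at_bot"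
    by (rule filterlim_compose[OF exp_at_top filterlim_uminus_at_top_at_bot])
  from filterlim_compose[OF tendsto_scaled_kernel_integral[OF assms] this] show ?thesis
    by (simp add: exp_of_nat_mult[symmetric] mult_ac)
qed

lemma mult_exp_neg_le_one: "y * exp (- y) \<le> (1::real)"
proof -
  have "y \<le> exp y"
    using exp_ge_add_one_self[of y] by linarith
  then show ?thesis
    by (simp add: exp_minus field_simps)
qed

lemma affine_isometry_dist: "affine_isometry \<phi> \<Longrightarrow> dist (\<phi> u) (\<phi> v) = dist u v"
  unfolding affine_isometry_def dist_norm by (metis add_diff_cancel_left linear_diff)

lemma affine_isometry_continuous:
  assumes "affine_isometry \<phi>"
  shows "continuous_on UNIV \<phi>"
proof -
  obtain a f where "linear f" and "\<phi> = (\<lambda>u. a + f u)"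
    using assms unfolding affine_isometry_def by blast
  then show ?thesis
    by (simp add: continuous_on_add linear_continuous_on linear_conv_bounded_linear)
qed

lemma eventually_ln_derivative_tendsto:
  fixes H H' :: "real \<Rightarrow> real"
  assumes deriv: "\<And>t. (H has_real_derivative H' t) (at t)"
    and lim: "((\<lambda>t. exp (- d * t) * H t) \<longlongrightarrow> L) at_bot"
    and lim': "((\<lambda>t. exp (- d * t) * H' t) \<longlongrightarrow> d * L) at_bot"
    and "L > 0" and "C > 0"
  shows "\<exists>g. (\<forall>\<^sub>F \<delta> in at_bot. ((\<lambda>t. ln (C * exp (- D * t) * H t)) has_real_derivative g \<delta>) (at \<delta>))
          \<and> (g \<longlongrightarrow> d - D) at_bot"
proof (intro exI conjI)
  show "\<forall>\<^sub>F \<delta> in at_bot. ((\<lambda>t. ln (C * exp (- D * t) * H t)) has_real_derivative H' \<delta> / H \<delta> - D) (at \<delta>)"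
    using order_tendstoD(1)[OF lim \<open>L > 0\<close>]
  proof eventually_elim
    case (elim \<delta>)
    then have "H \<delta> > 0"
      by (simp add: zero_less_mult_iff)
    then show ?case
      using \<open>C > 0\<close> by (auto intro!: derivative_eq_intros deriv simp: field_simps)
  qed
  have "((\<lambda>t. (exp (- d * t) * H' t) / (exp (- d * t) * H t) - D) \<longlongrightarrow> d * L / L - D) at_bot"
    using \<open>L > 0\<close> by (intro tendsto_intros lim lim') simp
  then show "((\<lambda>\<delta>. H' \<delta> / H \<delta> - D) \<longlongrightarrow> d - D) at_bot"
    using \<open>L > 0\<close> by simp
qed

definition gauss_smoothing :: "('b::euclidean_space \<Rightarrow> real) \<Rightarrow> 'b \<Rightarrow> real \<Rightarrow> real" where
  "gauss_smoothing q u0 t = (\<integral>u. q u * exp (- (exp (- t) * dist u u0)\<^sup>2 / 2) \<partial>lborel)"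

definition gauss_smoothing_deriv :: "('b::euclidean_space \<Rightarrow> real) \<Rightarrow> 'b \<Rightarrow> real \<Rightarrow> real" where
  "gauss_smoothing_deriv q u0 t =
     (\<integral>u. q u * ((exp (- t) * dist u u0)\<^sup>2 * exp (- (exp (- t) * dist u u0)\<^sup>2 / 2)) \<partial>lborel)"

lemma has_real_derivative_gauss_smoothing:
  assumes "integrable lborel q"
  shows "(gauss_smoothing q u0 has_real_derivative gauss_smoothing_deriv q u0 t) (at t)"
  unfolding gauss_smoothing_def[abs_def] gauss_smoothing_deriv_def
proof (rule has_real_derivative_integral_bounded_kernel[where B=2])
  show "((\<lambda>t. exp (- (exp (- t) * dist u u0)\<^sup>2 / 2)) has_real_derivative
      (exp (- s) * dist u u0)\<^sup>2 * exp (- (exp (- s) * dist u u0)\<^sup>2 / 2)) (at s)" for s u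
    by (auto intro!: derivative_eq_intros simp: power2_eq_square)
  show "\<bar>(exp (- s) * dist u u0)\<^sup>2 * exp (- (exp (- s) * dist u u0)\<^sup>2 / 2)\<bar> \<le> 2" for s u
    using mult_exp_neg_le_one[of "(exp (- s) * dist u u0)\<^sup>2 / 2"] by simp
  show "\<bar>exp (- (exp (- s) * dist u u0)\<^sup>2 / 2)\<bar> \<le> 2" for s u
    by (rule order_trans[of _ 1]) simp_all
qed (use assms in auto)

lemma tendsto_gauss_smoothing:
  fixes q :: "'b::euclidean_space \<Rightarrow> real"
  assumes "integrable lborel q" and "isCont q u0"
  shows "((\<lambda>t. exp (- real DIM('b) * t) * gauss_smoothing q u0 t) \<longlongrightarrow> q u0 * sqrt (2 * pi) ^ DIM('b)) at_bot"
  using tendsto_exp_scaled_kernel_integral[of q u0 "\<lambda>y. exp (- y / 2)" 1 "1 / 2"]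
    assms has_bochner_integral_gaussian[where 'a='b]
  by (simp add: gauss_smoothing_def has_bochner_integral_iff)

lemma tendsto_gauss_smoothing_deriv:
  fixes q :: "'b::euclidean_space \<Rightarrow> real"
  assumes "integrable lborel q" and "isCont q u0"
  shows "((\<lambda>t. exp (- real DIM('b) * t) * gauss_smoothing_deriv q u0 t)
          \<longlongrightarrow> DIM('b) * (q u0 * sqrt (2 * pi) ^ DIM('b))) at_bot"
proof -
  have "\<bar>y * exp (- y / 2)\<bar> \<le> 4 * exp (- (1 / 4) * y)" if "0 \<le> y" for y :: real
  proof -
    have "y * exp (- y / 4) \<le> 4"
      using mult_exp_neg_le_one[of "y / 4"] by simp
    then have "y * exp (- y / 4) * exp (- y / 4) \<le> 4 * exp (- y / 4)"
      by (rule mult_right_mono) simp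
    moreover have "exp (- y / 2) = exp (- y / 4) * exp (- y / 4)"
      by (simp flip: exp_add)
    ultimately show ?thesis
      using that by (simp add: abs_mult mult.assoc)
  qed
  then show ?thesis
    using tendsto_exp_scaled_kernel_integral[of q u0 "\<lambda>y. y * exp (- y / 2)" 4 "1 / 4"]
      assms has_bochner_integral_gaussian_second_moment[where 'a='b]
    by (simp add: gauss_smoothing_deriv_def has_bochner_integral_iff mult_ac)
qed

lemma smoothed_density_affine_isometry:
  fixes \<phi> :: "'b::euclidean_space \<Rightarrow> 'a::euclidean_space" and t :: real
  assumes "affine_isometry \<phi>"
  shows "smoothed_density \<phi> p (\<phi> u0) t
           = (2 * pi) powr (- real DIM('a) / 2) * exp (- real DIM('a) * t) * gauss_smoothing (\<lambda>u. p (\<phi> u)) u0 t"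
proof -
  have "(2 * pi * exp (2 * t)) powr (- real DIM('a) / 2)
      = (2 * pi) powr (- real DIM('a) / 2) * exp (2 * t) powr (- real DIM('a) / 2)"
    by (simp add: powr_mult)
  also have "exp (2 * t) powr (- real DIM('a) / 2) = exp (- real DIM('a) * t)"
    by (simp add: powr_def)
  finally have factor: "(2 * pi * exp (2 * t)) powr (- real DIM('a) / 2)
      = (2 * pi) powr (- real DIM('a) / 2) * exp (- real DIM('a) * t)" .
  have exponent: "(norm (\<phi> u0 - \<phi> u))\<^sup>2 / (2 * exp (2 * t)) = (exp (- t) * dist u u0)\<^sup>2 / 2" for u
    using affine_isometry_dist[OF assms, of u0 u]
    by (simp add: dist_norm norm_minus_commute power_mult_distrib exp_minus field_simps flip: exp_double)
  have "p (\<phi> u) * gauss_density (exp (2 * t)) (\<phi> u0 - \<phi> u)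
      = (2 * pi) powr (- real DIM('a) / 2) * exp (- real DIM('a) * t)
        * (p (\<phi> u) * exp (- (exp (- t) * dist u u0)\<^sup>2 / 2))" for u
    using factor exponent by (simp add: gauss_density_def)
  then show ?thesis
    unfolding smoothed_density_def gauss_smoothing_def by (simp only: integral_mult_right_zero)
qed

theorem theorem3p1:
  fixes \<phi> :: "'b::euclidean_space \<Rightarrow> 'a::euclidean_space"
    and p :: "'a \<Rightarrow> real"
    and x :: 'a
  assumes iso: "affine_isometry \<phi>"
    and nonneg: "\<And>u. p (\<phi> u) \<ge> 0"
    and cont: "continuous_on (range \<phi>) p"
    and integrable: "integrable (lborel :: 'b measure) (\<lambda>u. p (\<phi> u))"
    and normalized: "(\<integral>u. p (\<phi> u) \<partial>(lborel :: 'b measure)) = 1"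
    and second_moment: "integrable (lborel :: 'b measure) (\<lambda>u. p (\<phi> u) * (norm (\<phi> u))\<^sup>2)"
    and xL: "x \<in> range \<phi>"
    and px: "p x > 0"
  shows "\<exists>g. (\<forall>\<^sub>F \<delta> in at_bot.
               ((\<lambda>t. ln (smoothed_density \<phi> p x t)) has_real_derivative g \<delta>) (at \<delta>))
          \<and> (g \<longlongrightarrow> real DIM('b) - real DIM('a)) at_bot"
proof -
  obtain u0 where x: "x = \<phi> u0"
    using xL by blast
  have cont_u0: "isCont (\<lambda>u. p (\<phi> u)) u0"
    using continuous_on_compose2[OF cont affine_isometry_continuous[OF iso]]
    by (simp add: continuous_on_eq_continuous_at)
  have "p (\<phi> u0) * sqrt (2 * pi) ^ DIM('b) > 0"
    using px by (simp add: x)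
  then show ?thesis
    unfolding x smoothed_density_affine_isometry[OF iso]
    by (intro eventually_ln_derivative_tendsto[OF has_real_derivative_gauss_smoothing[OF integrable]
          tendsto_gauss_smoothing[OF integrable cont_u0] tendsto_gauss_smoothing_deriv[OF integrable cont_u0]])
      simp_all
qed

end
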